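(* Let $\beta>0$ and $k<0$. Let \[f_{+-}(x,y,z)=\beta(x^2y^2+y^2z^2+x^2z^2)+\Big(x^2+y^2+z^2-\tfrac12\Big)^2-\tfrac{1-k}{4}.\] Then the zero set $Q^{+-}(k)=\{(x,y,z)\in\mathbb{R}^3: f_{+-}(x,y,z)=0\}$ is a connected compact surface homeomorphic to a sphere.
   Context: $Q^{+-}(k)$ is an octahedral quartic, i.e. $f_{+-}$ is invariant under the group of $3\times 3$ signed permutation matrices. *)

theory Defs
  imports "HOL-Analysis.Analysis"
begin

definition f_pm :: "real \<Rightarrow> real \<Rightarrow> real ^ 3 \<Rightarrow> real" where
  "f_pm \<beta> k p = (let x = p $ 1; y = p $ 2; z = p $ 3 in
     \<beta> * (x^2 * y^2 + y^2 * z^2 + x^2 * z^2) + (x^2 + y^2 + z^2 - 1/2)^2 - (1 - k) / 4)"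

definition Q_pm :: "real \<Rightarrow> real \<Rightarrow> (real ^ 3) set" where
  "Q_pm \<beta> k = {p. f_pm \<beta> k p = 0}"

end

(* Along the ray through a unit vector u, f_{+-}(t u) = a(u) t^4 - t^2 + k/4 with
   a(u) = 1 + \<beta>(x^2y^2 + y^2z^2 + x^2z^2) > 0.  As a quadratic in t^2 its roots have product
   k/(4 a(u)) < 0, so every ray meets Q^{+-}(k) exactly once, at a radius depending continuously
   on u.  Thus Q^{+-}(k) is the radial graph of a positive continuous function over the unit
   sphere: a continuous injective image of a compact space, hence homeomorphic to the sphere. *)
theory Submission
  imports Defs "HOL-Library.Quadratic_Discriminant"
begin

definition quad_pos_root :: "real \<Rightarrow> real \<Rightarrow> real" where
  "quad_pos_root a c = (1 + sqrt (1 - 4 * a * c)) / (2 * a)"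

lemma quad_pos_root_pos:
  assumes "a > 0" and "c < 0"
  shows "quad_pos_root a c > 0"
proof -
  have "4 * a * c < 0"
    using assms by (simp add: mult_pos_neg)
  then have "1 + sqrt (1 - 4 * a * c) > 0"
    by (simp add: add_pos_nonneg)
  then show ?thesis
    unfolding quad_pos_root_def using assms(1) by simp
qed

lemma quad_pos_root_iff:
  fixes a c s :: real
  assumes "a > 0" and "c < 0"
  shows "s > 0 \<and> a * s\<^sup>2 - s + c = 0 \<longleftrightarrow> s = quad_pos_root a c"
proof -
  have discr: "discrim a (-1) c = 1 - 4 * a * c"
    by (simp add: discrim_def)
  have "4 * a * c < 0"
    using assms by (simp add: mult_pos_neg)
  then have "sqrt (1 - 4 * a * c) > 1"
    by simp
  then have neg_root: "(1 - sqrt (1 - 4 * a * c)) / (2 * a) < 0"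
    using assms(1) by (simp add: divide_neg_pos)
  have "a * s\<^sup>2 - s + c = 0 \<longleftrightarrow>
      s = quad_pos_root a c \<or> s = (1 - sqrt (1 - 4 * a * c)) / (2 * a)"
    using discriminant_nonneg[of a "-1" c s] assms \<open>4 * a * c < 0\<close>
    by (simp add: discr quad_pos_root_def)
  then show ?thesis
    using neg_root quad_pos_root_pos[OF assms] by auto
qed

lemma radial_graph_homeomorphic_sphere:
  fixes r :: "'a::euclidean_space \<Rightarrow> real"
  assumes cont: "continuous_on (sphere 0 1) r"
    and pos: "\<And>u. u \<in> sphere 0 1 \<Longrightarrow> r u > 0"
  shows "(\<lambda>u. r u *\<^sub>R u) ` sphere 0 1 homeomorphic sphere (0::'a) 1"
proof -
  have "inj_on (\<lambda>u. r u *\<^sub>R u) (sphere 0 1)"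
  proof (rule inj_onI)
    fix u v :: 'a
    assume u: "u \<in> sphere 0 1" and v: "v \<in> sphere 0 1" and eq: "r u *\<^sub>R u = r v *\<^sub>R v"
    have "r u = r v"
      using arg_cong[OF eq, of norm] u v pos[OF u] pos[OF v] by simp
    then show "u = v"
      using eq pos[OF u] by simp
  qed
  moreover have "continuous_on (sphere 0 1) (\<lambda>u. r u *\<^sub>R u)"
    by (intro continuous_intros cont)
  ultimately show ?thesis
    using homeomorphic_compact[OF compact_sphere] homeomorphic_sym by blast
qed

definition cross_quartic :: "real ^ 3 \<Rightarrow> real" where
  "cross_quartic p = (p$1)\<^sup>2 * (p$2)\<^sup>2 + (p$2)\<^sup>2 * (p$3)\<^sup>2 + (p$1)\<^sup>2 * (p$3)\<^sup>2"

lemma one_plus_cross_quartic_pos: "\<beta> \<ge> 0 \<Longrightarrow> 1 + \<beta> * cross_quartic p > 0"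
  by (simp add: cross_quartic_def add_pos_nonneg)

lemma continuous_on_cross_quartic: "continuous_on S cross_quartic"
  unfolding cross_quartic_def[abs_def] by (intro continuous_intros)

lemma f_pm_scaleR_unit:
  assumes "norm u = 1"
  shows "f_pm \<beta> k (t *\<^sub>R u) = (1 + \<beta> * cross_quartic u) * (t\<^sup>2)\<^sup>2 - t\<^sup>2 + k / 4"
proof -
  have "(u$1)\<^sup>2 + (u$2)\<^sup>2 + (u$3)\<^sup>2 = 1"
    using assms unfolding norm_vec_def L2_set_def by (simp add: sum_3)
  then show ?thesis
    unfolding f_pm_def cross_quartic_def Let_def
    by (simp add: power_mult_distrib field_simps) algebra
qed

definition Q_pm_radius :: "real \<Rightarrow> real \<Rightarrow> real ^ 3 \<Rightarrow> real" where
  "Q_pm_radius \<beta> k u = sqrt (quad_pos_root (1 + \<beta> * cross_quartic u) (k / 4))"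

lemma scaleR_unit_in_Q_pm_iff:
  assumes "\<beta> > 0" "k < 0" "norm u = 1" "t > 0"
  shows "t *\<^sub>R u \<in> Q_pm \<beta> k \<longleftrightarrow> t = Q_pm_radius \<beta> k u"
proof -
  have a: "1 + \<beta> * cross_quartic u > 0"
    using assms(1) by (simp add: one_plus_cross_quartic_pos)
  have "t *\<^sub>R u \<in> Q_pm \<beta> k \<longleftrightarrow> t\<^sup>2 = quad_pos_root (1 + \<beta> * cross_quartic u) (k / 4)"
    using quad_pos_root_iff[OF a, of "k / 4" "t\<^sup>2"] assms(2,4)
    by (simp add: Q_pm_def f_pm_scaleR_unit[OF assms(3)])
  also have "\<dots> \<longleftrightarrow> t = Q_pm_radius \<beta> k u"
    unfolding Q_pm_radius_def using assms(4) real_sqrt_unique by fastforce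
  finally show ?thesis .
qed

lemma zero_notin_Q_pm: "k < 0 \<Longrightarrow> 0 \<notin> Q_pm \<beta> k"
  by (simp add: Q_pm_def f_pm_def power2_eq_square)

lemma Q_pm_radius_pos:
  assumes "\<beta> > 0" "k < 0"
  shows "Q_pm_radius \<beta> k u > 0"
  using quad_pos_root_pos one_plus_cross_quartic_pos assms unfolding Q_pm_radius_def by simp

lemma continuous_on_Q_pm_radius:
  assumes "\<beta> > 0"
  shows "continuous_on S (Q_pm_radius \<beta> k)"
proof -
  have "2 * (1 + \<beta> * cross_quartic u) \<noteq> 0" for u
    using one_plus_cross_quartic_pos[of \<beta> u] assms by simp
  then show ?thesis
    unfolding Q_pm_radius_def[abs_def] quad_pos_root_def
    by (intro continuous_intros continuous_on_cross_quartic) auto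
qed

lemma Q_pm_eq_radial_graph:
  assumes "\<beta> > 0" "k < 0"
  shows "Q_pm \<beta> k = (\<lambda>u. Q_pm_radius \<beta> k u *\<^sub>R u) ` sphere 0 1"
proof (intro equalityI subsetI)
  fix p
  assume p: "p \<in> Q_pm \<beta> k"
  then have "p \<noteq> 0"
    using zero_notin_Q_pm[OF assms(2)] by blast
  define u where "u = p /\<^sub>R norm p"
  have u: "norm u = 1" and p_eq: "p = norm p *\<^sub>R u"
    using \<open>p \<noteq> 0\<close> by (simp_all add: u_def)
  have "norm p *\<^sub>R u \<in> Q_pm \<beta> k"
    using p \<open>p \<noteq> 0\<close> by (simp add: u_def)
  then have "norm p = Q_pm_radius \<beta> k u"
    using scaleR_unit_in_Q_pm_iff[OF assms u] \<open>p \<noteq> 0\<close> by simp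
  then show "p \<in> (\<lambda>u. Q_pm_radius \<beta> k u *\<^sub>R u) ` sphere 0 1"
    using u p_eq by force
next
  fix p
  assume "p \<in> (\<lambda>u. Q_pm_radius \<beta> k u *\<^sub>R u) ` sphere 0 1"
  then obtain u where "norm u = 1" and "p = Q_pm_radius \<beta> k u *\<^sub>R u"
    by auto
  then show "p \<in> Q_pm \<beta> k"
    using scaleR_unit_in_Q_pm_iff[OF assms] Q_pm_radius_pos[OF assms] by blast
qed

theorem lemma2:
  fixes \<beta> k :: real
  assumes "\<beta> > 0" and "k < 0"
  shows "compact (Q_pm \<beta> k) \<and> connected (Q_pm \<beta> k)
         \<and> Q_pm \<beta> k homeomorphic sphere (0 :: real ^ 3) 1"
proof -
  have "Q_pm \<beta> k homeomorphic sphere (0 :: real ^ 3) 1"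
    unfolding Q_pm_eq_radial_graph[OF assms]
    by (intro radial_graph_homeomorphic_sphere continuous_on_Q_pm_radius
        Q_pm_radius_pos assms)
  moreover have "connected (sphere (0 :: real ^ 3) 1)"
    by (simp add: connected_sphere)
  ultimately show ?thesis
    using homeomorphic_compactness homeomorphic_connectedness compact_sphere by blast
qed

end
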